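(* In the category $\mathcal H'$ described in the context, for every integer $k\ge1$ the following equality holds in $\mathrm{End}_{\mathcal H'}(\mathbf 1)$: \[\tilde c_{k+1}=\sum_{a=0}^{k-1}\tilde c_a\, c_{k-1-a}.\]
   Context: Let $\Bbbk$ be a commutative ring. The category $\mathcal{H}'$ is the $\Bbbk$-linear additive strict monoidal category defined as follows. For a finite sign sequence $\epsilon=\epsilon_1\cdots\epsilon_m$ there is an object $Q_\epsilon=Q_{\epsilon_1}\otimes\cdots\otimes Q_{\epsilon_m}$, $Q_\epsilon\otimes Q_{\epsilon'}=Q_{\epsilon\epsilon'}$, unit $\mathbf 1=Q_\emptyset$; general objects are finite formal direct sums. $\mathrm{Hom}(Q_\epsilon,Q_{\epsilon'})$ ($\epsilon$ of length $m$, $\epsilon'$ of length $k$) is the $\Bbbk$-module spanned by planar diagrams: compact oriented $1$-manifolds immersed in $\mathbb R\times[0,1]$ with only transverse double points, boundary $\{1,\dots,m\}\times\{0\}\cup\{1,\dots,k\}\times\{1\}$, the strand pointing upward at the $i$-th lower (resp. $j$-th upper) endpoint iff $\epsilon_i=+$ (resp. $\epsilon'_j=+$); up to isotopy rel boundary and modulo local relations. Composition is stacking, $\otimes$ is juxtaposition. With $X\in\mathrm{End}(Q_{++})$ the crossing of two upward strands, $\mathrm{cup}_{+-}:\mathbf 1\to Q_{+-}$, $\mathrm{cup}_{-+}:\mathbf 1\to Q_{-+}$, $\mathrm{cap}_{+-}:Q_{+-}\to\mathbf 1$, $\mathrm{cap}_{-+}:Q_{-+}\to\mathbf 1$ the oriented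 U-turns, and $Y:Q_{+-}\to Q_{-+}$, $Y':Q_{-+}\to Q_{+-}$ the mixed crossings, the relations are: $X^2=\mathrm{id}$; braid relation for $X$ on $Q_{+++}$; $Y'Y=\mathrm{id}_{Q_{+-}}$; $YY'=\mathrm{id}_{Q_{-+}}-\mathrm{cup}_{-+}\mathrm{cap}_{-+}$; $\mathrm{cap}_{-+}\mathrm{cup}_{-+}=\mathrm{id}_{\mathbf 1}$; $(\mathrm{cap}_{-+}\otimes\mathrm{id}_{Q_+})(\mathrm{id}_{Q_-}\otimes X)(\mathrm{cup}_{-+}\otimes\mathrm{id}_{Q_+})=0$ (left curl is zero). The dot (right curl) is $x=(\mathrm{id}_{Q_+}\otimes\mathrm{cap}_{+-})(X\otimes\mathrm{id}_{Q_-})(\mathrm{id}_{Q_+}\otimes\mathrm{cup}_{+-})\in\mathrm{End}(Q_+)$. The clockwise circle with $k$ dots is $c_k=\mathrm{cap}_{+-}\circ(x^k\otimes\mathrm{id}_{Q_-})\circ\mathrm{cup}_{+-}$ and the counterclockwise circle with $k$ dots is $\tilde c_k=\mathrm{cap}_{-+}\circ(\mathrm{id}_{Q_-}\otimes x^k)\circ\mathrm{cup}_{-+}$, both in the commutative algebra $\mathrm{End}_{\mathcal H'}(\mathbf 1)$, whose product is composition. *)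

theory Defs
  imports Main
begin

text \<open>A presentation of the diagrammatic category H' as the free strict monoidal
  k-linear category on objects Q_+ , Q_- and the generating morphisms X, cups and caps,
  modulo planar isotopy (zigzag relations and cyclicity of the crossing) and the
  local relations of the paper.\<close>

datatype sgn = Pos | Neg

fun dual :: "sgn \<Rightarrow> sgn" where
  "dual Pos = Neg" | "dual Neg = Pos"

datatype 'k tm =
    Id "sgn list"
  | Xg                    \<comment> \<open>upward crossing, Q_{++} to Q_{++}\<close>
  | CupPM
  | CupMP
  | CapPM
  | CapMP
  | Cmp "'k tm" "'k tm"   \<comment> \<open>Cmp f g = f after g\<close>
  | Tns "'k tm" "'k tm"
  | Zr "sgn list" "sgn list"
  | Pls "'k tm" "'k tm"
  | Sm 'k "'k tm"

text \<open>mty f = Some (source, target)\<close>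
fun mty :: "'k tm \<Rightarrow> (sgn list \<times> sgn list) option" where
  "mty (Id s) = Some (s, s)"
| "mty Xg = Some ([Pos,Pos], [Pos,Pos])"
| "mty CupPM = Some ([], [Pos,Neg])"
| "mty CupMP = Some ([], [Neg,Pos])"
| "mty CapPM = Some ([Pos,Neg], [])"
| "mty CapMP = Some ([Neg,Pos], [])"
| "mty (Cmp f g) = (case (mty f, mty g) of
      (Some (b, c), Some (a, b')) \<Rightarrow> (if b' = b then Some (a, c) else None)
    | _ \<Rightarrow> None)"
| "mty (Tns f g) = (case (mty f, mty g) of
      (Some (a, b), Some (c, d)) \<Rightarrow> Some (a @ c, b @ d)
    | _ \<Rightarrow> None)"
| "mty (Zr a b) = Some (a, b)"
| "mty (Pls f g) = (if mty f = mty g then mty f else None)"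
| "mty (Sm r f) = mty f"

fun cup :: "sgn \<Rightarrow> 'k tm" where
  "cup Pos = CupMP" | "cup Neg = CupPM"
fun cap :: "sgn \<Rightarrow> 'k tm" where
  "cap Pos = CapPM" | "cap Neg = CapMP"

text \<open>Rotations (by isotopy) of a morphism f : Q_{ab} to Q_{cd}.
  rotL f : Q_{b, dual d} to Q_{dual a, c};  rotR f : Q_{dual c, a} to Q_{d, dual b}.\<close>
definition rotL :: "sgn \<Rightarrow> sgn \<Rightarrow> sgn \<Rightarrow> sgn \<Rightarrow> 'k tm \<Rightarrow> 'k tm" where
  "rotL a b c d f =
     Cmp (Tns (Id [dual a, c]) (cap d))
       (Cmp (Tns (Tns (Id [dual a]) f) (Id [dual d]))
            (Tns (cup a) (Id [b, dual d])))"

definition rotR :: "sgn \<Rightarrow> sgn \<Rightarrow> sgn \<Rightarrow> sgn \<Rightarrow> 'k tm \<Rightarrow> 'k tm" where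
  "rotR a b c d f =
     Cmp (Tns (cap (dual c)) (Id [d, dual b]))
       (Cmp (Tns (Tns (Id [dual c]) f) (Id [dual b]))
            (Tns (Id [dual c, a]) (cup (dual b))))"

definition Yg :: "'k tm" where "Yg = rotL Pos Pos Pos Pos Xg"
definition Yg' :: "'k tm" where "Yg' = rotR Pos Pos Pos Pos Xg"

text \<open>Generating equations (typing is imposed in heq).\<close>
inductive ax :: "'k::comm_ring_1 tm \<Rightarrow> 'k tm \<Rightarrow> bool" where
  add_comm: "ax (Pls f g) (Pls g f)"
| add_assoc: "ax (Pls (Pls f g) h) (Pls f (Pls g h))"
| add_zero: "ax (Pls f (Zr a b)) f"
| add_neg: "ax (Pls f (Sm (-1) f)) (Zr a b)"
| sm_distl: "ax (Sm r (Pls f g)) (Pls (Sm r f) (Sm r g))"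
| sm_distr: "ax (Sm (r + s) f) (Pls (Sm r f) (Sm s f))"
| sm_assoc: "ax (Sm (r * s) f) (Sm r (Sm s f))"
| sm_one: "ax (Sm 1 f) f"
| id_left: "ax (Cmp (Id b) f) f"
| id_right: "ax (Cmp f (Id a)) f"
| cmp_assoc: "ax (Cmp (Cmp f g) h) (Cmp f (Cmp g h))"
| cmp_pls_l: "ax (Cmp (Pls f g) h) (Pls (Cmp f h) (Cmp g h))"
| cmp_pls_r: "ax (Cmp f (Pls g h)) (Pls (Cmp f g) (Cmp f h))"
| cmp_sm_l: "ax (Cmp (Sm r f) g) (Sm r (Cmp f g))"
| cmp_sm_r: "ax (Cmp f (Sm r g)) (Sm r (Cmp f g))"
| tns_assoc: "ax (Tns (Tns f g) h) (Tns f (Tns g h))"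
| tns_unit_l: "ax (Tns (Id []) f) f"
| tns_unit_r: "ax (Tns f (Id [])) f"
| tns_id: "ax (Tns (Id a) (Id b)) (Id (a @ b))"
| interchange: "ax (Cmp (Tns f g) (Tns f' g')) (Tns (Cmp f f') (Cmp g g'))"
| tns_pls_l: "ax (Tns (Pls f g) h) (Pls (Tns f h) (Tns g h))"
| tns_pls_r: "ax (Tns f (Pls g h)) (Pls (Tns f g) (Tns f h))"
| tns_sm_l: "ax (Tns (Sm r f) g) (Sm r (Tns f g))"
| tns_sm_r: "ax (Tns f (Sm r g)) (Sm r (Tns f g))"
| zz1: "ax (Cmp (Tns CapPM (Id [Pos])) (Tns (Id [Pos]) CupMP)) (Id [Pos])"
| zz2: "ax (Cmp (Tns (Id [Pos]) CapMP) (Tns CupPM (Id [Pos]))) (Id [Pos])"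
| zz3: "ax (Cmp (Tns CapMP (Id [Neg])) (Tns (Id [Neg]) CupPM)) (Id [Neg])"
| zz4: "ax (Cmp (Tns (Id [Neg]) CapPM) (Tns CupMP (Id [Neg]))) (Id [Neg])"
  \<comment> \<open>planar isotopy: cyclicity of the crossing (downward crossing well defined)\<close>
| pivotal: "ax (rotL Pos Neg Neg Pos Yg) (rotR Neg Pos Pos Neg Yg')"
| X_sq: "ax (Cmp Xg Xg) (Id [Pos,Pos])"
| braid: "ax (Cmp (Tns Xg (Id [Pos])) (Cmp (Tns (Id [Pos]) Xg) (Tns Xg (Id [Pos]))))
             (Cmp (Tns (Id [Pos]) Xg) (Cmp (Tns Xg (Id [Pos])) (Tns (Id [Pos]) Xg)))"
| YY1: "ax (Cmp Yg' Yg) (Id [Pos,Neg])"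
| YY2: "ax (Cmp Yg Yg') (Pls (Id [Neg,Pos]) (Sm (-1) (Cmp CupMP CapMP)))"
| circ: "ax (Cmp CapMP CupMP) (Id [])"
| left_curl: "ax (Cmp (Tns CapMP (Id [Pos])) (Cmp (Tns (Id [Neg]) Xg) (Tns CupMP (Id [Pos]))))
               (Zr [Pos] [Pos])"

inductive heq :: "'k::comm_ring_1 tm \<Rightarrow> 'k tm \<Rightarrow> bool" where
  heq_ax: "ax f g \<Longrightarrow> mty f \<noteq> None \<Longrightarrow> mty g = mty f \<Longrightarrow> heq f g"
| heq_refl: "mty f \<noteq> None \<Longrightarrow> heq f f"
| heq_sym: "heq f g \<Longrightarrow> heq g f"
| heq_trans: "heq f g \<Longrightarrow> heq g h \<Longrightarrow> heq f h"
| heq_cmp: "heq f f' \<Longrightarrow> heq g g' \<Longrightarrow> mty (Cmp f g) \<noteq> None \<Longrightarrow> heq (Cmp f g) (Cmp f' g')"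
| heq_tns: "heq f f' \<Longrightarrow> heq g g' \<Longrightarrow> heq (Tns f g) (Tns f' g')"
| heq_pls: "heq f f' \<Longrightarrow> heq g g' \<Longrightarrow> mty (Pls f g) \<noteq> None \<Longrightarrow> heq (Pls f g) (Pls f' g')"
| heq_sm: "heq f f' \<Longrightarrow> heq (Sm r f) (Sm r f')"

definition dot :: "'k tm" where
  "dot = Cmp (Tns (Id [Pos]) CapPM) (Cmp (Tns Xg (Id [Neg])) (Tns (Id [Pos]) CupPM))"

fun dotpow :: "nat \<Rightarrow> 'k tm" where
  "dotpow 0 = Id [Pos]"
| "dotpow (Suc n) = Cmp dot (dotpow n)"

definition cw :: "nat \<Rightarrow> 'k tm" where
  "cw k = Cmp CapPM (Cmp (Tns (dotpow k) (Id [Neg])) CupPM)"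

definition ccw :: "nat \<Rightarrow> 'k tm" where
  "ccw k = Cmp CapMP (Cmp (Tns (Id [Neg]) (dotpow k)) CupMP)"

definition tsum :: "sgn list \<Rightarrow> sgn list \<Rightarrow> 'k tm list \<Rightarrow> 'k tm" where
  "tsum a b fs = foldr Pls fs (Zr a b)"

end

theory Submission
  imports Defs
begin

text \<open>Let \<open>C(a, b)\<close> be the counterclockwise circle carrying \<open>a\<close> dots whose strand also
  carries a right curl with \<open>b\<close> dots on its loop.  The undotted right curl is the dot, so
  \<open>C(a, 0) = ccw (a + 1)\<close>; for \<open>a = 0\<close> the curl is isotopic to one containing a left curl,
  so \<open>C(0, b) = 0\<close>.  Sliding a dot through the crossing of the curl,
  \<open>(x \<otimes> 1) X = X (1 \<otimes> x) + 1\<close>, gives \<open>C(a + 1, b) = C(a, b + 1) + ccw a \<cdot> cw b\<close>, and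
  telescoping from \<open>C(k, 0)\<close> down to \<open>C(0, k)\<close> yields the formula.  The dot slide
  itself is obtained by inserting \<open>1 = Y Y' + cup cap\<close> on \<open>Q\<^sub>-\<^sub>+\<close> next to the cup of the dot.\<close>

section \<open>Morphisms as a quotient of terms\<close>

lemma heq_typed: "heq f g \<Longrightarrow> mty f \<noteq> None \<and> mty g = mty f"
proof (induction rule: heq.induct)
  case (heq_tns f f' g g')
  then show ?case by (auto split: option.splits)
qed auto

text \<open>All ill-typed terms are identified, so that the quotient is a total algebra in
  which every operation is defined.\<close>
definition mor_rel :: "'k::comm_ring_1 tm \<Rightarrow> 'k tm \<Rightarrow> bool" where
  "mor_rel f g \<longleftrightarrow> heq f g \<or> (mty f = None \<and> mty g = None)"

lemma equivp_mor_rel: "equivp (mor_rel :: 'k::comm_ring_1 tm \<Rightarrow> 'k tm \<Rightarrow> bool)"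
proof (rule equivpI)
  show "reflp (mor_rel :: 'k tm \<Rightarrow> 'k tm \<Rightarrow> bool)"
    by (auto simp: reflp_def mor_rel_def intro: heq_refl)
  show "symp (mor_rel :: 'k tm \<Rightarrow> 'k tm \<Rightarrow> bool)"
    by (auto simp: symp_def mor_rel_def intro: heq_sym)
  show "transp (mor_rel :: 'k tm \<Rightarrow> 'k tm \<Rightarrow> bool)"
    unfolding transp_def mor_rel_def by (metis heq_trans heq_typed)
qed

quotient_type (overloaded) 'k mor = "'k::comm_ring_1 tm" / mor_rel
  by (rule equivp_mor_rel)

lift_definition cmp :: "'k::comm_ring_1 mor \<Rightarrow> 'k mor \<Rightarrow> 'k mor" (infixr "\<odot>" 55) is Cmp
proof -
  fix f f' g g' :: "'k tm"
  assume rel: "mor_rel f f'" "mor_rel g g'"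
  show "mor_rel (Cmp f g) (Cmp f' g')"
  proof (cases "heq f f' \<and> heq g g'")
    case True
    then have "mty f' = mty f" "mty g' = mty g" using heq_typed by blast+
    then have "mty (Cmp f' g') = mty (Cmp f g)" by simp
    then show ?thesis using True unfolding mor_rel_def
      by (cases "mty (Cmp f g) = None") (auto intro: heq_cmp simp del: mty.simps)
  next
    case False
    then have "mty f = None \<and> mty f' = None \<or> mty g = None \<and> mty g' = None"
      using rel unfolding mor_rel_def by blast
    then show ?thesis unfolding mor_rel_def by (auto split: option.splits)
  qed
qed

lift_definition tns :: "'k::comm_ring_1 mor \<Rightarrow> 'k mor \<Rightarrow> 'k mor" (infixr "\<otimes>" 60) is Tns
proof -
  fix f f' g g' :: "'k tm"
  assume rel: "mor_rel f f'" "mor_rel g g'"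
  show "mor_rel (Tns f g) (Tns f' g')"
  proof (cases "heq f f' \<and> heq g g'")
    case True
    then show ?thesis unfolding mor_rel_def by (auto intro: heq_tns)
  next
    case False
    then have "mty f = None \<and> mty f' = None \<or> mty g = None \<and> mty g' = None"
      using rel unfolding mor_rel_def by blast
    then show ?thesis unfolding mor_rel_def by (auto split: option.splits)
  qed
qed

lift_definition pls :: "'k::comm_ring_1 mor \<Rightarrow> 'k mor \<Rightarrow> 'k mor" (infixr "\<boxplus>" 52) is Pls
proof -
  fix f f' g g' :: "'k tm"
  assume rel: "mor_rel f f'" "mor_rel g g'"
  show "mor_rel (Pls f g) (Pls f' g')"
  proof (cases "heq f f' \<and> heq g g'")
    case True
    then have "mty f' = mty f" "mty g' = mty g" using heq_typed by blast+
    then have "mty (Pls f' g') = mty (Pls f g)" by simp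
    then show ?thesis using True unfolding mor_rel_def
      by (cases "mty (Pls f g) = None") (auto intro: heq_pls simp del: mty.simps)
  next
    case False
    then have "mty f = None \<and> mty f' = None \<or> mty g = None \<and> mty g' = None"
      using rel unfolding mor_rel_def by blast
    then show ?thesis unfolding mor_rel_def by auto
  qed
qed

lift_definition sm :: "'k::comm_ring_1 \<Rightarrow> 'k mor \<Rightarrow> 'k mor" is Sm
  unfolding mor_rel_def by (auto intro: heq_sm)

lift_definition ty :: "'k::comm_ring_1 mor \<Rightarrow> (sgn list \<times> sgn list) option" is mty
  unfolding mor_rel_def using heq_typed by fastforce

definition idm :: "sgn list \<Rightarrow> 'k::comm_ring_1 mor" where
  "idm s = abs_mor (Id s)"

definition zr :: "sgn list \<Rightarrow> sgn list \<Rightarrow> 'k::comm_ring_1 mor" where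
  "zr a b = abs_mor (Zr a b)"

lemma abs_mor_simps:
  "abs_mor (Cmp f g) = abs_mor f \<odot> abs_mor g"
  "abs_mor (Tns f g) = abs_mor f \<otimes> abs_mor g"
  "abs_mor (Pls f g) = abs_mor f \<boxplus> abs_mor g"
  "abs_mor (Sm r f) = sm r (abs_mor f)"
  "abs_mor (Id s) = idm s"
  "abs_mor (Zr a b) = zr a b"
  by (simp_all add: cmp.abs_eq tns.abs_eq pls.abs_eq sm.abs_eq idm_def zr_def)

lemma ty_abs_mor [simp]: "ty (abs_mor f) = mty f"
  by (simp add: ty.abs_eq)

lemma ty_simps [simp]:
  "ty (u \<odot> v) = (case (ty u, ty v) of
      (Some (b, c), Some (a, b')) \<Rightarrow> (if b' = b then Some (a, c) else None)
    | _ \<Rightarrow> None)"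
  "ty (u \<otimes> v) = (case (ty u, ty v) of
      (Some (a, b), Some (c, d)) \<Rightarrow> Some (a @ c, b @ d)
    | _ \<Rightarrow> None)"
  "ty (u \<boxplus> v) = (if ty u = ty v then ty u else None)"
  "ty (sm r u) = ty u"
  "ty (idm s) = Some (s, s)"
  "ty (zr a b) = Some (a, b)"
  subgoal by transfer simp
  subgoal by transfer simp
  subgoal by transfer simp
  subgoal by transfer simp
  subgoal by (simp add: idm_def)
  subgoal by (simp add: zr_def)
  done

lemma untyped_eq: "ty u = None \<Longrightarrow> ty v = None \<Longrightarrow> u = v"
  by transfer (simp add: mor_rel_def)

lemma ax_mor_rel: "ax f g \<Longrightarrow> mty g = mty f \<Longrightarrow> mor_rel f g"
  unfolding mor_rel_def by (cases "mty f = None") (auto intro: heq_ax)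

lemma ax_abs_mor_eq: "ax f g \<Longrightarrow> mty g = mty f \<Longrightarrow> abs_mor f = abs_mor g"
  by (simp add: mor.abs_eq_iff ax_mor_rel)

lemma cmp_assoc: "(u \<odot> v) \<odot> t = u \<odot> (v \<odot> t)"
  by transfer (rule ax_mor_rel[OF ax.cmp_assoc], auto split: option.splits)

lemma tns_assoc: "(u \<otimes> v) \<otimes> t = u \<otimes> (v \<otimes> t)"
  by transfer (rule ax_mor_rel[OF ax.tns_assoc], auto split: option.splits)

lemma tns_unit_left [simp]: "idm [] \<otimes> u = u"
  unfolding idm_def by transfer (rule ax_mor_rel[OF ax.tns_unit_l], auto split: option.splits)

lemma tns_unit_right [simp]: "u \<otimes> idm [] = u"
  unfolding idm_def by transfer (rule ax_mor_rel[OF ax.tns_unit_r], auto split: option.splits)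

lemma tns_idm: "idm a \<otimes> idm b = idm (a @ b)"
  unfolding idm_def by transfer (rule ax_mor_rel[OF ax.tns_id], auto)

lemma idm_cmp: "ty f = Some (x, y) \<Longrightarrow> idm y \<odot> f = f"
  unfolding idm_def by transfer (rule ax_mor_rel[OF ax.id_left], auto)

lemma cmp_idm: "ty f = Some (x, y) \<Longrightarrow> f \<odot> idm x = f"
  unfolding idm_def by transfer (rule ax_mor_rel[OF ax.id_right], auto)

text \<open>Variants of the typed laws whose hypotheses mention only variables of the
  left-hand side, so that the simplifier can use them as conditional rewrite rules.\<close>

lemma idm_cmp': "ty f \<noteq> None \<Longrightarrow> snd (the (ty f)) = y \<Longrightarrow> idm y \<odot> f = f"
  by (cases "ty f") (auto intro: idm_cmp)

lemma cmp_idm': "ty f \<noteq> None \<Longrightarrow> fst (the (ty f)) = x \<Longrightarrow> f \<odot> idm x = f"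
  by (cases "ty f") (auto intro: cmp_idm)

lemma interchange:
  "ty f = Some (b1, c1) \<Longrightarrow> ty f' = Some (a1, b1) \<Longrightarrow> ty g = Some (b2, c2) \<Longrightarrow>
   ty g' = Some (a2, b2) \<Longrightarrow> (f \<otimes> g) \<odot> (f' \<otimes> g') = (f \<odot> f') \<otimes> (g \<odot> g')"
  by transfer (rule ax_mor_rel[OF ax.interchange], auto)

lemma pls_commute: "u \<boxplus> v = v \<boxplus> u"
  by transfer (rule ax_mor_rel[OF ax.add_comm], auto)

lemma pls_assoc: "(u \<boxplus> v) \<boxplus> t = u \<boxplus> (v \<boxplus> t)"
  by transfer (rule ax_mor_rel[OF ax.add_assoc], auto)

lemma pls_zr: "ty u = Some (a, b) \<Longrightarrow> u \<boxplus> zr a b = u"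
  unfolding zr_def by transfer (rule ax_mor_rel[OF ax.add_zero], auto)

lemma pls_neg: "ty u = Some (a, b) \<Longrightarrow> u \<boxplus> sm (-1) u = zr a b"
  unfolding zr_def by transfer (rule ax_mor_rel[OF ax.add_neg], auto)

lemma sm_add: "sm (r + s) u = sm r u \<boxplus> sm s u"
  by transfer (rule ax_mor_rel[OF ax.sm_distr], auto)

lemma sm_one [simp]: "sm 1 u = u"
  by transfer (rule ax_mor_rel[OF ax.sm_one], auto)

lemma cmp_pls_left_typed: "ty f = Some (b, c) \<Longrightarrow> ty g = Some (b, c) \<Longrightarrow> ty h = Some (a, b) \<Longrightarrow>
   (f \<boxplus> g) \<odot> h = f \<odot> h \<boxplus> g \<odot> h"
  by transfer (rule ax_mor_rel[OF ax.cmp_pls_l], auto)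

lemma cmp_pls_right_typed: "ty f = Some (b, c) \<Longrightarrow> ty g = Some (a, b) \<Longrightarrow> ty h = Some (a, b) \<Longrightarrow>
   f \<odot> (g \<boxplus> h) = f \<odot> g \<boxplus> f \<odot> h"
  by transfer (rule ax_mor_rel[OF ax.cmp_pls_r], auto)

lemma cmp_pls_left:
  "ty f \<noteq> None \<Longrightarrow> ty g = ty f \<Longrightarrow> ty h \<noteq> None \<Longrightarrow> snd (the (ty h)) = fst (the (ty f)) \<Longrightarrow>
   (f \<boxplus> g) \<odot> h = f \<odot> h \<boxplus> g \<odot> h"
  by (cases "ty f"; cases "ty h") (auto intro: cmp_pls_left_typed)

lemma cmp_pls_right:
  "ty f \<noteq> None \<Longrightarrow> ty g \<noteq> None \<Longrightarrow> ty h = ty g \<Longrightarrow> snd (the (ty g)) = fst (the (ty f)) \<Longrightarrow>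
   f \<odot> (g \<boxplus> h) = f \<odot> g \<boxplus> f \<odot> h"
  by (cases "ty f"; cases "ty g") (auto intro: cmp_pls_right_typed)

lemma tns_pls_left: "ty f = Some (a, b) \<Longrightarrow> ty g = Some (a, b) \<Longrightarrow> ty h \<noteq> None \<Longrightarrow>
   (f \<boxplus> g) \<otimes> h = f \<otimes> h \<boxplus> g \<otimes> h"
  by transfer (rule ax_mor_rel[OF ax.tns_pls_l], auto)

lemma tns_pls_right: "ty g = Some (a, b) \<Longrightarrow> ty h = Some (a, b) \<Longrightarrow> ty f \<noteq> None \<Longrightarrow>
   f \<otimes> (g \<boxplus> h) = f \<otimes> g \<boxplus> f \<otimes> h"
  by transfer (rule ax_mor_rel[OF ax.tns_pls_r], auto)

lemma sm_cmp: "sm r f \<odot> g = sm r (f \<odot> g)"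
  by transfer (rule ax_mor_rel[OF ax.cmp_sm_l], auto)

lemma cmp_sm: "f \<odot> sm r g = sm r (f \<odot> g)"
  by transfer (rule ax_mor_rel[OF ax.cmp_sm_r], auto)

lemma sm_tns: "sm r f \<otimes> g = sm r (f \<otimes> g)"
  by transfer (rule ax_mor_rel[OF ax.tns_sm_l], auto)

lemma tns_sm: "f \<otimes> sm r g = sm r (f \<otimes> g)"
  by transfer (rule ax_mor_rel[OF ax.tns_sm_r], auto)

lemma sm_zero: "ty u = Some (a, b) \<Longrightarrow> sm 0 u = zr a b"
proof -
  assume "ty u = Some (a, b)"
  have "sm 0 u = sm (1 + -1) u" by simp
  also have "\<dots> = u \<boxplus> sm (-1) u" by (simp only: sm_add sm_one)
  also have "\<dots> = zr a b" using \<open>ty u = Some (a, b)\<close> by (rule pls_neg)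
  finally show ?thesis .
qed

lemma zr_cmp: "ty f = Some (a, b) \<Longrightarrow> zr b c \<odot> f = zr a c"
proof -
  assume "ty f = Some (a, b)"
  have "zr b c \<odot> f = sm 0 (zr b c) \<odot> f" by (simp add: sm_zero)
  also have "\<dots> = sm 0 (zr b c \<odot> f)" by (rule sm_cmp)
  also have "\<dots> = zr a c" using \<open>ty f = Some (a, b)\<close> by (simp add: sm_zero)
  finally show ?thesis .
qed

lemma cmp_zr: "ty f = Some (b, c) \<Longrightarrow> f \<odot> zr a b = zr a c"
proof -
  assume "ty f = Some (b, c)"
  have "f \<odot> zr a b = f \<odot> sm 0 (zr a b)" by (simp add: sm_zero)
  also have "\<dots> = sm 0 (f \<odot> zr a b)" by (rule cmp_sm)
  also have "\<dots> = zr a c" using \<open>ty f = Some (b, c)\<close> by (simp add: sm_zero)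
  finally show ?thesis .
qed

lemma zr_tns: "ty f = Some (c, d) \<Longrightarrow> zr a b \<otimes> f = zr (a @ c) (b @ d)"
proof -
  assume "ty f = Some (c, d)"
  have "zr a b \<otimes> f = sm 0 (zr a b) \<otimes> f" by (simp add: sm_zero)
  also have "\<dots> = sm 0 (zr a b \<otimes> f)" by (rule sm_tns)
  also have "\<dots> = zr (a @ c) (b @ d)" using \<open>ty f = Some (c, d)\<close> by (simp add: sm_zero)
  finally show ?thesis .
qed

lemma tns_zr: "ty f = Some (c, d) \<Longrightarrow> f \<otimes> zr a b = zr (c @ a) (d @ b)"
proof -
  assume "ty f = Some (c, d)"
  have "f \<otimes> zr a b = f \<otimes> sm 0 (zr a b)" by (simp add: sm_zero)
  also have "\<dots> = sm 0 (f \<otimes> zr a b)" by (rule tns_sm)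
  also have "\<dots> = zr (c @ a) (d @ b)" using \<open>ty f = Some (c, d)\<close> by (simp add: sm_zero)
  finally show ?thesis .
qed

definition whisk :: "sgn list \<Rightarrow> 'k::comm_ring_1 mor \<Rightarrow> sgn list \<Rightarrow> 'k mor" where
  "whisk l f r = idm l \<otimes> f \<otimes> idm r"

lemma ty_whisk [simp]:
  "ty (whisk l f r) =
     (case ty f of Some (a, b) \<Rightarrow> Some (l @ a @ r, l @ b @ r) | None \<Rightarrow> None)"
  unfolding whisk_def by (simp split: option.splits)

lemma whisk_Nil [simp]: "whisk [] f [] = f"
  by (simp add: whisk_def)

lemma whisk_whisk: "whisk l (whisk l' f r') r = whisk (l @ l') f (r' @ r)"
  unfolding whisk_def by (simp add: tns_assoc tns_idm[symmetric])

lemma whisk_tns_idm: "whisk l (f \<otimes> idm m) r = whisk l f (m @ r)"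
  unfolding whisk_def by (simp add: tns_assoc tns_idm[symmetric])

lemma whisk_idm_tns: "whisk l (idm m \<otimes> f) r = whisk (l @ m) f r"
  unfolding whisk_def by (simp add: tns_assoc tns_idm[symmetric])

lemma whisk_idm: "whisk l (idm a) r = idm (l @ a @ r)"
  unfolding whisk_def by (simp add: tns_idm)

lemma whisk_zr: "whisk l (zr a b) r = zr (l @ a @ r) (l @ b @ r)"
  unfolding whisk_def by (simp add: zr_tns tns_zr)

lemma whisk_pls: "ty f \<noteq> None \<Longrightarrow> ty g = ty f \<Longrightarrow> whisk l (f \<boxplus> g) r = whisk l f r \<boxplus> whisk l g r"
  unfolding whisk_def by (cases "ty f") (auto simp: tns_pls_left tns_pls_right)

lemma whisk_cmp: "whisk l f r \<odot> whisk l g r = whisk l (f \<odot> g) r"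
proof (cases "ty f = None \<or> ty g = None \<or> fst (the (ty f)) \<noteq> snd (the (ty g))")
  case True
  then show ?thesis by (intro untyped_eq) (auto split: option.splits)
next
  case False
  then obtain a b c where "ty f = Some (b, c)" "ty g = Some (a, b)"
    by (cases "ty f"; cases "ty g") auto
  then show ?thesis unfolding whisk_def by (simp add: interchange idm_cmp)
qed

lemma whisk_commute:
  assumes "ty f = Some (a, b)" and "ty g = Some (c, d)"
  shows "whisk l f (m @ d @ r) \<odot> whisk (l @ a @ m) g r = whisk (l @ b @ m) g r \<odot> whisk l f (m @ c @ r)"
proof -
  have "whisk l f (m @ d @ r) \<odot> whisk (l @ a @ m) g r
      = whisk l ((f \<otimes> idm m \<otimes> idm d) \<odot> (idm a \<otimes> idm m \<otimes> g)) r"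
    by (simp add: whisk_cmp[symmetric] tns_assoc[symmetric] tns_idm whisk_tns_idm whisk_idm_tns)
  also have "\<dots> = whisk l ((idm b \<otimes> idm m \<otimes> g) \<odot> (f \<otimes> idm m \<otimes> idm c)) r"
    using assms by (simp add: interchange idm_cmp cmp_idm)
  also have "\<dots> = whisk (l @ b @ m) g r \<odot> whisk l f (m @ c @ r)"
    by (simp add: whisk_cmp[symmetric] tns_assoc[symmetric] tns_idm whisk_tns_idm whisk_idm_tns)
  finally show ?thesis .
qed

lemma cmp_rewrite: "u \<odot> v = t \<Longrightarrow> u \<odot> (v \<odot> s) = t \<odot> s"
  by (simp add: cmp_assoc[symmetric])

lemma cmp_rewrite3: "u \<odot> v \<odot> t = t' \<Longrightarrow> u \<odot> (v \<odot> (t \<odot> s)) = t' \<odot> s"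
  by (simp add: cmp_assoc[symmetric])

abbreviation "P \<equiv> Pos"
abbreviation "N \<equiv> Neg"
abbreviation X :: "'k::comm_ring_1 mor" where "X \<equiv> abs_mor Xg"
abbreviation cupPM :: "'k::comm_ring_1 mor" where "cupPM \<equiv> abs_mor CupPM"
abbreviation cupMP :: "'k::comm_ring_1 mor" where "cupMP \<equiv> abs_mor CupMP"
abbreviation capPM :: "'k::comm_ring_1 mor" where "capPM \<equiv> abs_mor CapPM"
abbreviation capMP :: "'k::comm_ring_1 mor" where "capMP \<equiv> abs_mor CapMP"
abbreviation Y :: "'k::comm_ring_1 mor" where "Y \<equiv> abs_mor Yg"
abbreviation Y' :: "'k::comm_ring_1 mor" where "Y' \<equiv> abs_mor Yg'"
abbreviation xdot :: "'k::comm_ring_1 mor" where "xdot \<equiv> abs_mor dot"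
abbreviation xdots :: "nat \<Rightarrow> 'k::comm_ring_1 mor" where "xdots n \<equiv> abs_mor (dotpow n)"

lemma mty_dot [simp]: "mty dot = Some ([P], [P])"
  by (simp add: dot_def)

lemma mty_dotpow [simp]: "mty (dotpow n) = Some ([P], [P])"
  by (induct n) auto

lemma mty_Yg [simp]: "mty Yg = Some ([P,N], [N,P])"
  by (simp add: Yg_def rotL_def)

lemma mty_Yg' [simp]: "mty Yg' = Some ([N,P], [P,N])"
  by (simp add: Yg'_def rotR_def)

lemma mty_cw [simp]: "mty (cw n) = Some ([], [])"
  by (simp add: cw_def)

lemma mty_ccw [simp]: "mty (ccw n) = Some ([], [])"
  by (simp add: ccw_def)

lemma xdot_eq: "xdot = whisk [P] capPM [] \<odot> whisk [] X [N] \<odot> whisk [P] cupPM []"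
  by (simp add: dot_def abs_mor_simps whisk_def)

lemma Y_eq: "Y = whisk [N,P] capPM [] \<odot> whisk [N] X [N] \<odot> whisk [] cupMP [P,N]"
  by (simp add: Yg_def rotL_def abs_mor_simps whisk_def tns_assoc)

lemma Y'_eq: "Y' = whisk [] capMP [P,N] \<odot> whisk [N] X [N] \<odot> whisk [N,P] cupPM []"
  by (simp add: Yg'_def rotR_def abs_mor_simps whisk_def tns_assoc)

lemma ccw_eq: "abs_mor (ccw n) = capMP \<odot> whisk [N] (xdots n) [] \<odot> cupMP"
  by (simp add: ccw_def abs_mor_simps whisk_def)

lemma cw_eq: "abs_mor (cw n) = capPM \<odot> whisk [] (xdots n) [N] \<odot> cupPM"
  by (simp add: cw_def abs_mor_simps whisk_def)

lemma xdots_Suc: "xdots (Suc n) = xdots n \<odot> (xdot :: 'k::comm_ring_1 mor)"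
proof (induct n)
  case 0
  then show ?case by (simp add: abs_mor_simps idm_cmp' cmp_idm')
next
  case (Suc n)
  have "xdots (Suc (Suc n)) = xdot \<odot> xdots (Suc n)"
    by (subst dotpow.simps(2)) (simp only: abs_mor_simps)
  also have "\<dots> = (xdot \<odot> xdots n) \<odot> (xdot :: 'k mor)"
    by (simp only: Suc.hyps cmp_assoc)
  finally show ?case by (subst (2) dotpow.simps(2)) (simp only: abs_mor_simps)
qed

lemma zigzag_capPM_cupMP: "whisk l (capPM :: 'k::comm_ring_1 mor) (P # r) \<odot> whisk (l @ [P]) cupMP r = idm (l @ P # r)"
proof -
  have "whisk [] (capPM :: 'k mor) [P] \<odot> whisk [P] cupMP [] = idm [P]"
    using ax_abs_mor_eq[OF ax.zz1] by (simp add: abs_mor_simps whisk_def)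
  from arg_cong[OF this, of "\<lambda>u. whisk l u r"] show ?thesis
    by (simp add: whisk_cmp[symmetric] whisk_whisk whisk_idm)
qed

lemma zigzag_capMP_cupPM: "whisk (l @ [P]) (capMP :: 'k::comm_ring_1 mor) r \<odot> whisk l cupPM (P # r) = idm (l @ P # r)"
proof -
  have "whisk [P] (capMP :: 'k mor) [] \<odot> whisk [] cupPM [P] = idm [P]"
    using ax_abs_mor_eq[OF ax.zz2] by (simp add: abs_mor_simps whisk_def)
  from arg_cong[OF this, of "\<lambda>u. whisk l u r"] show ?thesis
    by (simp add: whisk_cmp[symmetric] whisk_whisk whisk_idm)
qed

lemma X_X: "whisk l (X :: 'k::comm_ring_1 mor) r \<odot> whisk l X r = idm (l @ [P,P] @ r)"
proof -
  have "(X :: 'k mor) \<odot> X = idm [P,P]"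
    using ax_abs_mor_eq[OF ax.X_sq] by (simp add: abs_mor_simps)
  from arg_cong[OF this, of "\<lambda>u. whisk l u r"] show ?thesis
    by (simp add: whisk_cmp whisk_idm)
qed

lemma braid:
  "whisk l (X :: 'k::comm_ring_1 mor) (P # r) \<odot> whisk (l @ [P]) X r \<odot> whisk l X (P # r)
 = whisk (l @ [P]) X r \<odot> whisk l X (P # r) \<odot> whisk (l @ [P]) X r"
proof -
  have "whisk [] (X :: 'k mor) [P] \<odot> whisk [P] X [] \<odot> whisk [] X [P] = whisk [P] X [] \<odot> whisk [] X [P] \<odot> whisk [P] X []"
    using ax_abs_mor_eq[OF ax.braid] by (simp add: abs_mor_simps whisk_def)
  from arg_cong[OF this, of "\<lambda>u. whisk l u r"] show ?thesis
    by (simp add: whisk_cmp[symmetric] whisk_whisk)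
qed

lemma left_curl_zero:
  "whisk l (capMP :: 'k::comm_ring_1 mor) (P # r) \<odot> whisk (l @ [N]) X r \<odot> whisk l cupMP (P # r) = zr (l @ P # r) (l @ P # r)"
proof -
  have "whisk [] (capMP :: 'k mor) [P] \<odot> whisk [N] X [] \<odot> whisk [] cupMP [P] = zr [P] [P]"
    using ax_abs_mor_eq[OF ax.left_curl] by (simp add: abs_mor_simps whisk_def)
  from arg_cong[OF this, of "\<lambda>u. whisk l u r"] show ?thesis
    by (simp add: whisk_cmp[symmetric] whisk_whisk whisk_zr)
qed

lemma Y_Y'_pls_cup_cap: "Y \<odot> Y' \<boxplus> cupMP \<odot> capMP = (idm [N,P] :: 'k::comm_ring_1 mor)"
proof -
  have "(Y :: 'k mor) \<odot> Y' = idm [N,P] \<boxplus> sm (-1) (cupMP \<odot> capMP)"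
    using ax_abs_mor_eq[OF ax.YY2] by (simp add: abs_mor_simps)
  then have "(Y :: 'k mor) \<odot> Y' \<boxplus> cupMP \<odot> capMP = idm [N,P] \<boxplus> (cupMP \<odot> capMP \<boxplus> sm (-1) (cupMP \<odot> capMP))"
    by (simp only: pls_assoc pls_commute[of "sm (-1) (cupMP \<odot> capMP)"])
  also have "\<dots> = idm [N,P]"
    by (simp add: pls_neg pls_zr)
  finally show ?thesis .
qed

section \<open>Sliding a dot through a crossing\<close>

lemma Y'_cupPM: "whisk [P] (Y' :: 'k::comm_ring_1 mor) [] \<odot> whisk [] cupPM [P] = whisk [] X [N] \<odot> whisk [P] cupPM []"
proof -
  have cups: "whisk [P,N,P] (cupPM :: 'k mor) [] \<odot> whisk [] cupPM [P] = whisk [] cupPM [P,P,N] \<odot> whisk [P] cupPM []"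
    using whisk_commute[where f="cupPM :: 'k mor" and a="[]" and b="[P,N]" and g=cupPM and c="[]" and d="[P,N]" and l="[]" and m="[P]" and r="[]"] by simp
  have X_cup: "whisk [P,N] (X :: 'k mor) [N] \<odot> whisk [] cupPM [P,P,N] = whisk [] cupPM [P,P,N] \<odot> whisk [] X [N]"
    using whisk_commute[where f="cupPM :: 'k mor" and a="[]" and b="[P,N]" and g=X and c="[P,P]" and d="[P,P]" and l="[]" and m="[]" and r="[N]"] by simp
  have zigzag: "whisk [P] (capMP :: 'k mor) [P,N] \<odot> whisk [] cupPM [P,P,N] = idm [P,P,N]"
    using zigzag_capMP_cupPM[of "[]" "[P,N]"] by simp
  have "whisk [P] (Y' :: 'k mor) [] \<odot> whisk [] cupPM [P] = whisk [P] capMP [P,N] \<odot> whisk [P,N] X [N] \<odot> whisk [P,N,P] cupPM [] \<odot> whisk [] cupPM [P]"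
    by (simp add: Y'_eq whisk_cmp[symmetric] whisk_whisk cmp_assoc)
  also have "\<dots> = whisk [P] capMP [P,N] \<odot> whisk [P,N] X [N] \<odot> whisk [] cupPM [P,P,N] \<odot> whisk [P] cupPM []"
    by (simp only: cups)
  also have "\<dots> = whisk [P] capMP [P,N] \<odot> whisk [] cupPM [P,P,N] \<odot> whisk [] X [N] \<odot> whisk [P] cupPM []"
    by (simp only: cmp_assoc cmp_rewrite[OF X_cup])
  also have "\<dots> = whisk [] X [N] \<odot> whisk [P] cupPM []"
    by (simp add: cmp_rewrite[OF zigzag] idm_cmp')
  finally show ?thesis .
qed

lemma cupPM_expand: "whisk [] (cupPM :: 'k::comm_ring_1 mor) [P] = whisk [P] Y [] \<odot> whisk [] X [N] \<odot> whisk [P] cupPM [] \<boxplus> whisk [P] cupMP []"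
proof -
  have "whisk [] (cupPM :: 'k mor) [P] = whisk [P] (idm [N,P]) [] \<odot> whisk [] cupPM [P]" by (simp add: whisk_idm idm_cmp')
  also have "\<dots> = whisk [P] (Y \<odot> Y' \<boxplus> cupMP \<odot> capMP) [] \<odot> whisk [] cupPM [P]" by (simp only: Y_Y'_pls_cup_cap)
  also have "\<dots> = (whisk [P] (Y \<odot> Y') [] \<boxplus> whisk [P] (cupMP \<odot> capMP) []) \<odot> whisk [] cupPM [P]" by (simp add: whisk_pls)
  also have "\<dots> = whisk [P] (Y \<odot> Y') [] \<odot> whisk [] cupPM [P] \<boxplus> whisk [P] (cupMP \<odot> capMP) [] \<odot> whisk [] cupPM [P]"
    by (simp add: cmp_pls_left)
  also have "\<dots> = whisk [P] Y [] \<odot> whisk [P] Y' [] \<odot> whisk [] cupPM [P] \<boxplus> whisk [P] cupMP [] \<odot> whisk [P] capMP [] \<odot> whisk [] cupPM [P]"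
    by (simp add: whisk_cmp[symmetric] cmp_assoc)
  also have "\<dots> = whisk [P] Y [] \<odot> whisk [] X [N] \<odot> whisk [P] cupPM [] \<boxplus> whisk [P] cupMP []"
    by (simp add: Y'_cupPM zigzag_capMP_cupPM[of "[]" "[]", simplified] cmp_idm')
  finally show ?thesis .
qed

lemma capPM_Y: "whisk [] (capPM :: 'k::comm_ring_1 mor) [P] \<odot> whisk [P] Y [] = whisk [P] capPM [] \<odot> whisk [] X [N]"
proof -
  have caps: "whisk [] (capPM :: 'k mor) [P] \<odot> whisk [P,N,P] capPM [] = whisk [P] capPM [] \<odot> whisk [] capPM [P,P,N]"
    using whisk_commute[where f="capPM :: 'k mor" and a="[P,N]" and b="[]" and g=capPM and c="[P,N]" and d="[]" and l="[]" and m="[P]" and r="[]"] by simp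
  have cap_X: "whisk [] (capPM :: 'k mor) [P,P,N] \<odot> whisk [P,N] X [N] = whisk [] X [N] \<odot> whisk [] capPM [P,P,N]"
    using whisk_commute[where f="capPM :: 'k mor" and a="[P,N]" and b="[]" and g=X and c="[P,P]" and d="[P,P]" and l="[]" and m="[]" and r="[N]"] by simp
  have zigzag: "whisk [] (capPM :: 'k mor) [P,P,N] \<odot> whisk [P] cupMP [P,N] = idm [P,P,N]"
    using zigzag_capPM_cupMP[of "[]" "[P,N]"] by simp
  have "whisk [] (capPM :: 'k mor) [P] \<odot> whisk [P] Y [] = whisk [] capPM [P] \<odot> whisk [P,N,P] capPM [] \<odot> whisk [P,N] X [N] \<odot> whisk [P] cupMP [P,N]"
    by (simp add: Y_eq whisk_cmp[symmetric] whisk_whisk cmp_assoc)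
  also have "\<dots> = whisk [P] capPM [] \<odot> whisk [] capPM [P,P,N] \<odot> whisk [P,N] X [N] \<odot> whisk [P] cupMP [P,N]"
    by (simp only: cmp_assoc cmp_rewrite[OF caps])
  also have "\<dots> = whisk [P] capPM [] \<odot> whisk [] X [N] \<odot> whisk [] capPM [P,P,N] \<odot> whisk [P] cupMP [P,N]"
    by (simp only: cmp_assoc cmp_rewrite[OF cap_X])
  also have "\<dots> = whisk [P] capPM [] \<odot> whisk [] X [N]"
    by (simp add: zigzag cmp_idm')
  finally show ?thesis .
qed

definition dot_via_Y :: "'k::comm_ring_1 mor" where
  "dot_via_Y = whisk [P] capPM [P] \<odot> whisk [] X [N,P] \<odot> whisk [P,P] Y [] \<odot> whisk [P] X [N] \<odot> whisk [P,P] cupPM []"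

lemma ty_dot_via_Y [simp]: "ty dot_via_Y = Some ([P,P], [P,P])"
  by (simp add: dot_via_Y_def)

lemma xdot_tns_idm_eq: "whisk [] (xdot :: 'k::comm_ring_1 mor) [P] = dot_via_Y \<boxplus> X"
proof -
  have expand: "whisk [P] (cupPM :: 'k mor) [P] = whisk [P,P] Y [] \<odot> whisk [P] X [N] \<odot> whisk [P,P] cupPM [] \<boxplus> whisk [P,P] cupMP []"
    using arg_cong[OF cupPM_expand, of "\<lambda>u. whisk [P] u []"]
    by (simp add: whisk_pls whisk_cmp[symmetric] whisk_whisk)
  have slide: "whisk [] (X :: 'k mor) [N,P] \<odot> whisk [P,P] cupMP [] = whisk [P,P] cupMP [] \<odot> X"
    using whisk_commute[where f="X :: 'k mor" and a="[P,P]" and b="[P,P]" and g=cupMP and c="[]" and d="[N,P]" and l="[]" and m="[]" and r="[]"]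
    by simp
  have zigzag: "whisk [P] (capPM :: 'k mor) [P] \<odot> whisk [P,P] cupMP [] = idm [P,P]"
    using zigzag_capPM_cupMP[of "[P]" "[]"] by simp
  have "whisk [] (xdot :: 'k mor) [P] = whisk [P] capPM [P] \<odot> whisk [] X [N,P] \<odot> whisk [P] cupPM [P]"
    by (simp add: xdot_eq whisk_cmp[symmetric] whisk_whisk)
  also have "\<dots> = dot_via_Y \<boxplus> whisk [P] capPM [P] \<odot> whisk [] X [N,P] \<odot> whisk [P,P] cupMP []"
    unfolding expand dot_via_Y_def by (simp add: cmp_pls_right)
  also have "\<dots> = dot_via_Y \<boxplus> X"
    by (simp add: slide cmp_rewrite[OF zigzag] idm_cmp')
  finally show ?thesis .
qed

lemma dot_via_Y_X: "dot_via_Y \<odot> (X :: 'k::comm_ring_1 mor) = X \<odot> whisk [P] xdot []"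
proof -
  have cup_X: "whisk [P,P] (cupPM :: 'k mor) [] \<odot> X = whisk [] X [P,N] \<odot> whisk [P,P] cupPM []"
    using whisk_commute[where f="X :: 'k mor" and a="[P,P]" and b="[P,P]" and g=cupPM and c="[]" and d="[P,N]" and l="[]" and m="[]" and r="[]"] by simp
  have X_Y: "whisk [] (X :: 'k mor) [N,P] \<odot> whisk [P,P] Y [] = whisk [P,P] Y [] \<odot> whisk [] X [P,N]"
    using whisk_commute[where f="X :: 'k mor" and a="[P,P]" and b="[P,P]" and g=Y and c="[P,N]" and d="[N,P]" and l="[]" and m="[]" and r="[]"] by simp
  have cap_Y: "whisk [P] (capPM :: 'k mor) [P] \<odot> whisk [P,P] Y [] = whisk [P,P] capPM [] \<odot> whisk [P] X [N]"
    using arg_cong[OF capPM_Y, of "\<lambda>u. whisk [P] u []"] by (simp add: whisk_cmp[symmetric] whisk_whisk)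
  have braid_PPP: "whisk [P] (X :: 'k mor) [N] \<odot> whisk [] X [P,N] \<odot> whisk [P] X [N] = whisk [] X [P,N] \<odot> whisk [P] X [N] \<odot> whisk [] X [P,N]"
    using braid[of "[]" "[N]", symmetric] by simp
  have X_X_PPP: "whisk [] (X :: 'k mor) [P,N] \<odot> whisk [] X [P,N] = idm [P,P,P,N]"
    using X_X[of "[]" "[P,N]"] by simp
  have cap_X: "whisk [P,P] (capPM :: 'k mor) [] \<odot> whisk [] X [P,N] = X \<odot> whisk [P,P] capPM []"
    using whisk_commute[where f="X :: 'k mor" and a="[P,P]" and b="[P,P]" and g=capPM and c="[P,N]" and d="[]" and l="[]" and m="[]" and r="[]"] by simp
  have dot: "whisk [P,P] (capPM :: 'k mor) [] \<odot> whisk [P] X [N] \<odot> whisk [P,P] cupPM [] = whisk [P] xdot []"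
    by (simp add: xdot_eq whisk_cmp[symmetric] whisk_whisk)
  have "dot_via_Y \<odot> (X :: 'k mor) = whisk [P] capPM [P] \<odot> whisk [] X [N,P] \<odot> whisk [P,P] Y [] \<odot> whisk [P] X [N] \<odot> whisk [] X [P,N] \<odot> whisk [P,P] cupPM []"
    unfolding dot_via_Y_def by (simp only: cmp_assoc cup_X)
  also have "\<dots> = whisk [P,P] capPM [] \<odot> whisk [P] X [N] \<odot> whisk [] X [P,N] \<odot> whisk [P] X [N] \<odot> whisk [] X [P,N] \<odot> whisk [P,P] cupPM []"
    by (simp only: cmp_assoc cmp_rewrite[OF X_Y] cmp_rewrite[OF cap_Y])
  also have "\<dots> = whisk [P,P] capPM [] \<odot> whisk [] X [P,N] \<odot> whisk [P] X [N] \<odot> whisk [] X [P,N] \<odot> whisk [] X [P,N] \<odot> whisk [P,P] cupPM []"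
    by (simp only: cmp_assoc cmp_rewrite3[OF braid_PPP])
  also have "\<dots> = whisk [P,P] capPM [] \<odot> whisk [] X [P,N] \<odot> whisk [P] X [N] \<odot> whisk [P,P] cupPM []"
    by (simp add: cmp_rewrite[OF X_X_PPP] idm_cmp')
  also have "\<dots> = X \<odot> whisk [P] xdot []"
    by (simp only: cmp_assoc cmp_rewrite[OF cap_X] dot)
  finally show ?thesis .
qed

lemma dot_slide: "whisk [] (xdot :: 'k::comm_ring_1 mor) [P] \<odot> X = X \<odot> whisk [P] xdot [] \<boxplus> idm [P,P]"
proof -
  have "whisk [] (xdot :: 'k mor) [P] \<odot> X = dot_via_Y \<odot> X \<boxplus> X \<odot> X"
    by (simp add: xdot_tns_idm_eq cmp_pls_left)
  then show ?thesis
    by (simp add: dot_via_Y_X X_X[of "[]" "[]", simplified])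
qed

section \<open>Dotted curls and the telescoping sum\<close>

definition curl :: "nat \<Rightarrow> 'k::comm_ring_1 mor" where
  "curl b = whisk [P] capPM [] \<odot> whisk [] X [N] \<odot> whisk [P] (xdots b) [N] \<odot> whisk [P] cupPM []"

lemma ty_curl [simp]: "ty (curl b) = Some ([P], [P])" by (simp add: curl_def)

text \<open>The diagram \<open>C(a, b)\<close> of the proof sketch.\<close>
definition curled_ccw :: "nat \<Rightarrow> nat \<Rightarrow> 'k::comm_ring_1 mor" where
  "curled_ccw a b = capMP \<odot> whisk [N] (xdots a \<odot> curl b) [] \<odot> cupMP"

lemma curl_0: "curl 0 = xdot"
  by (simp add: curl_def xdot_eq abs_mor_simps whisk_idm idm_cmp')

lemma dot_curl: "(xdot :: 'k::comm_ring_1 mor) \<odot> curl b = curl (Suc b) \<boxplus> whisk [P] (abs_mor (cw b)) []"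
proof -
  have dot_cap: "(xdot :: 'k mor) \<odot> whisk [P] capPM [] = whisk [P] capPM [] \<odot> whisk [] xdot [P,N]"
    using whisk_commute[where f="xdot :: 'k mor" and a="[P]" and b="[P]" and g=capPM and c="[P,N]" and d="[]" and l="[]" and m="[]" and r="[]"] by simp
  have slide: "whisk [] (xdot :: 'k mor) [P,N] \<odot> whisk [] X [N] = whisk [] X [N] \<odot> whisk [P] xdot [N] \<boxplus> idm [P,P,N]"
    using arg_cong[OF dot_slide[where 'k='k], of "\<lambda>u. whisk [] u [N]"] by (simp add: whisk_pls whisk_cmp[symmetric] whisk_whisk whisk_idm)
  have "(xdot :: 'k mor) \<odot> curl b = whisk [P] capPM [] \<odot> whisk [] xdot [P,N] \<odot> whisk [] X [N] \<odot> whisk [P] (xdots b) [N] \<odot> whisk [P] cupPM []"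
    unfolding curl_def by (simp only: cmp_assoc cmp_rewrite[OF dot_cap])
  also have "\<dots> = whisk [P] capPM [] \<odot> (whisk [] X [N] \<odot> whisk [P] xdot [N] \<boxplus> idm [P,P,N]) \<odot> whisk [P] (xdots b) [N] \<odot> whisk [P] cupPM []"
    by (simp only: cmp_assoc cmp_rewrite[OF slide])
  also have "\<dots> = whisk [P] capPM [] \<odot> whisk [] X [N] \<odot> whisk [P] xdot [N] \<odot> whisk [P] (xdots b) [N] \<odot> whisk [P] cupPM []
      \<boxplus> whisk [P] capPM [] \<odot> idm [P,P,N] \<odot> whisk [P] (xdots b) [N] \<odot> whisk [P] cupPM []"
    by (simp add: cmp_pls_left cmp_pls_right cmp_assoc)
  also have "\<dots> = curl (Suc b) \<boxplus> whisk [P] (abs_mor (cw b)) []"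
    by (simp add: curl_def cw_eq whisk_cmp[symmetric] whisk_whisk abs_mor_simps cmp_assoc idm_cmp')
  finally show ?thesis .
qed

lemma curled_ccw_Suc_left: "curled_ccw (Suc a) b = curled_ccw a (Suc b) \<boxplus> abs_mor (ccw a) \<odot> (abs_mor (cw b) :: 'k::comm_ring_1 mor)"
proof -
  let ?c = "abs_mor (cw b) :: 'k mor"
  have cup_circle: "whisk [N,P] ?c [] \<odot> cupMP = cupMP \<odot> ?c"
    using whisk_commute[where f="cupMP :: 'k mor" and a="[]" and b="[N,P]" and g="?c" and c="[]" and d="[]" and l="[]" and m="[]" and r="[]"] by simp
  have "(curled_ccw (Suc a) b :: 'k mor) = capMP \<odot> whisk [N] (xdots a \<odot> (xdot \<odot> curl b)) [] \<odot> cupMP"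
    unfolding curled_ccw_def by (simp only: xdots_Suc cmp_assoc)
  also have "\<dots> = capMP \<odot> whisk [N] (xdots a \<odot> (curl (Suc b) \<boxplus> whisk [P] ?c [])) [] \<odot> cupMP"
    by (simp only: dot_curl)
  also have "\<dots> = capMP \<odot> (whisk [N] (xdots a \<odot> curl (Suc b)) [] \<boxplus> whisk [N] (xdots a \<odot> whisk [P] ?c []) []) \<odot> cupMP"
    by (simp add: cmp_pls_right whisk_pls del: dotpow.simps)
  also have "\<dots> = curled_ccw a (Suc b) \<boxplus> capMP \<odot> whisk [N] (xdots a \<odot> whisk [P] ?c []) [] \<odot> cupMP"
    unfolding curled_ccw_def by (simp add: cmp_pls_left cmp_pls_right del: dotpow.simps)
  also have "capMP \<odot> whisk [N] (xdots a \<odot> whisk [P] ?c []) [] \<odot> cupMP = capMP \<odot> whisk [N] (xdots a) [] \<odot> whisk [N,P] ?c [] \<odot> cupMP"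
    by (simp add: whisk_cmp[symmetric] whisk_whisk cmp_assoc del: dotpow.simps)
  also have "\<dots> = abs_mor (ccw a) \<odot> ?c"
    by (simp add: cup_circle ccw_eq cmp_assoc del: dotpow.simps)
  finally show ?thesis .
qed

lemma curled_ccw_0_left: "curled_ccw 0 b = (zr [] [] :: 'k::comm_ring_1 mor)"
proof -
  have cap_cap: "(capMP :: 'k mor) \<odot> whisk [N,P] capPM [] = capPM \<odot> whisk [] capMP [P,N]"
    using whisk_commute[where f="capMP :: 'k mor" and a="[N,P]" and b="[]" and g=capPM and c="[P,N]" and d="[]" and l="[]" and m="[]" and r="[]"] by simp
  have cup_cup: "whisk [N,P] (cupPM :: 'k mor) [] \<odot> cupMP = whisk [] cupMP [P,N] \<odot> cupPM"
    using whisk_commute[where f="cupMP :: 'k mor" and a="[]" and b="[N,P]" and g=cupPM and c="[]" and d="[P,N]" and l="[]" and m="[]" and r="[]"] by simp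
  have dots_cup: "whisk [N,P] (xdots b :: 'k mor) [N] \<odot> whisk [] cupMP [P,N] = whisk [] cupMP [P,N] \<odot> whisk [] (xdots b) [N]"
    using whisk_commute[where f="cupMP :: 'k mor" and a="[]" and b="[N,P]" and g="xdots b" and c="[P]" and d="[P]" and l="[]" and m="[]" and r="[N]"] by (simp del: dotpow.simps)
  have left_curl: "whisk [] (capMP :: 'k mor) [P,N] \<odot> whisk [N] X [N] \<odot> whisk [] cupMP [P,N] = zr [P,N] [P,N]"
    using left_curl_zero[of "[]" "[N]"] by simp
  have "(curled_ccw 0 b :: 'k mor) = capMP \<odot> whisk [N,P] capPM [] \<odot> whisk [N] X [N] \<odot> whisk [N,P] (xdots b) [N] \<odot> whisk [N,P] cupPM [] \<odot> cupMP"
    unfolding curled_ccw_def curl_def by (simp add: whisk_idm abs_mor_simps idm_cmp' whisk_cmp[symmetric] whisk_whisk cmp_assoc)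
  also have "\<dots> = capPM \<odot> whisk [] capMP [P,N] \<odot> whisk [N] X [N] \<odot> whisk [] cupMP [P,N] \<odot> whisk [] (xdots b) [N] \<odot> cupPM"
    by (simp only: cmp_assoc cup_cup cmp_rewrite[OF dots_cup] cmp_rewrite[OF cap_cap])
  also have "\<dots> = zr [] []"
    by (simp add: cmp_rewrite3[OF left_curl] zr_cmp cmp_zr del: dotpow.simps)
  finally show ?thesis .
qed

lemma foldr_pls_shift: "foldr (\<boxplus>) L (A \<boxplus> t) = t \<boxplus> foldr (\<boxplus>) L (A :: 'k::comm_ring_1 mor)"
proof (induct L)
  case Nil then show ?case by (simp add: pls_commute)
next
  case (Cons l L)
  have "foldr (\<boxplus>) (l # L) (A \<boxplus> t) = l \<boxplus> (t \<boxplus> foldr (\<boxplus>) L A)" using Cons by simp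
  also have "\<dots> = t \<boxplus> (l \<boxplus> foldr (\<boxplus>) L A)" by (metis pls_assoc pls_commute)
  finally show ?case by simp
qed

lemma curled_ccw_0_right: "curled_ccw k 0 = (abs_mor (ccw (Suc k)) :: 'k::comm_ring_1 mor)"
  unfolding curled_ccw_def ccw_eq curl_0 by (simp only: xdots_Suc)

lemma ccw_telescope:
  fixes k :: nat
  defines "F \<equiv> (\<lambda>a. abs_mor (ccw a) \<odot> (abs_mor (cw (k - 1 - a)) :: 'k::comm_ring_1 mor))"
  shows "j \<le> k \<Longrightarrow> abs_mor (ccw (Suc k)) = foldr (\<boxplus>) (map F [k - j..<k]) (curled_ccw (k - j) j)"
proof (induct j)
  case 0 then show ?case by (simp add: curled_ccw_0_right)
next
  case (Suc j)
  define a where "a = k - Suc j"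
  have ka: "k - j = Suc a" using Suc.prems unfolding a_def by simp
  have kb: "k - 1 - a = j" using Suc.prems unfolding a_def by simp
  have L: "[k - Suc j..<k] = a # [k - j..<k]" using Suc.prems unfolding a_def
    by (simp add: upt_conv_Cons Suc_diff_Suc)
  have "abs_mor (ccw (Suc k)) = foldr (\<boxplus>) (map F [k - j..<k]) (curled_ccw (Suc a) j)"
    using Suc ka by simp
  also have "\<dots> = foldr (\<boxplus>) (map F [k - j..<k]) (curled_ccw a (Suc j) \<boxplus> F a)"
    by (simp only: curled_ccw_Suc_left F_def kb)
  also have "\<dots> = F a \<boxplus> foldr (\<boxplus>) (map F [k - j..<k]) (curled_ccw a (Suc j))"
    by (rule foldr_pls_shift)
  also have "\<dots> = foldr (\<boxplus>) (map F [k - Suc j..<k]) (curled_ccw (k - Suc j) (Suc j))"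
    unfolding L a_def by simp
  finally show ?case .
qed

lemma abs_mor_tsum: "abs_mor (tsum a b L) = foldr (\<boxplus>) (map abs_mor L) (zr a b)"
  unfolding tsum_def by (induct L) (simp_all add: abs_mor_simps)


theorem proposition2:
  fixes k :: nat
  assumes "k \<ge> 1"
  shows "heq (ccw (k + 1) :: 'k::comm_ring_1 tm)
             (tsum [] [] (map (\<lambda>a. Cmp (ccw a) (cw (k - 1 - a))) [0..<k]))"
proof -
  have "abs_mor (ccw (Suc k)) = foldr (\<boxplus>) (map (\<lambda>a. abs_mor (ccw a) \<odot> (abs_mor (cw (k - 1 - a)) :: 'k mor)) [k - k..<k]) (curled_ccw (k - k) k)"
    by (rule ccw_telescope) simp
  also have "\<dots> = abs_mor (tsum [] [] (map (\<lambda>a. Cmp (ccw a) (cw (k - 1 - a))) [0..<k]))"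
    by (simp add: curled_ccw_0_left abs_mor_tsum abs_mor_simps o_def del: dotpow.simps)
  finally have "mor_rel (ccw (k + 1) :: 'k tm) (tsum [] [] (map (\<lambda>a. Cmp (ccw a) (cw (k - 1 - a))) [0..<k]))"
    unfolding mor.abs_eq_iff[symmetric] by simp
  then show ?thesis unfolding mor_rel_def by simp
qed

end
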